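(* Let $n$ be a non-negative integer and let $F$ be the filter in the poset $I_{n}^{\bullet}$ of pointed integer partitions of $n$ generated by a pointed knapsack partition $\{\lambda,\underline{m}\}=\{\lambda_1,\dots,\lambda_p,\underline{m}\}$ of $n$. Let $C_{n}^{\bullet}(F)=\{\vec{c}\in C_{n}^{\bullet}:\mathrm{type}(\vec{c})\in F\}$ and let $\vec{c}=(c_1,\dots,c_{k-1},\underline{c_k})\in C_n^{\bullet}(F)$. Then in the lattice $C_{n}^{\bullet}(F)\cup\{\hat{0}\}$, $$\mu(\hat{0},\vec{c})=\begin{cases}(-1)^{p-k} & \text{if } \vec{c}\in V,\\ 0 & \text{otherwise.}\end{cases}$$
   Context: A pointed integer partition of $n$ is a pair $\{\lambda,\underline{m}\}=\{\lambda_1,\dots,\lambda_k,\underline{m}\}$ where $m\ge 0$ is an integer (the pointed part) and $\lambda$ is an integer partition (multiset of positive integers) of $n-m$. The poset $I_n^{\bullet}$ of all pointed integer partitions of $n$ is ordered by the cover relations: replacing two non-pointed parts by their sum, and replacing a non-pointed part $\lambda_k$ and the pointed part $m$ by the pointed part $\lambda_k+m$ (going up). The filter generated by an element $x$ is $\{y: x\le y\}$. A multiset $\lambda=\{e_1^{m_1},\dots,e_q^{m_q}\}$ of positive integers (distinct $e_i$ with multiplicities $m_i$) is a knapsack partition if the number of distinct integers of the form $\sum_{e\in\mu}e$, $\mu$ a sub-multiset of $\lambda$, equals $\prod_{i=1}^q(m_i+1)$; equivalently each such sum has a unique representation as a sum of a sub-multiset of $\lambda$. A pointed integer partition $\{\lambda,\underline{m}\}$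 is a pointed knapsack partition if $\lambda$ is a knapsack partition. A pointed composition of $n$ is a list $\vec{c}=(c_1,\dots,c_{k-1},\underline{c_k})$ of non-negative integers with sum $n$ where $c_1,\dots,c_{k-1}$ are positive. $C_n^{\bullet}$ is the poset of these with cover relations given by adding two adjacent entries (if the last entry is involved, the sum is the new last entry). The type of $\vec{c}$ is the pointed integer partition $\{c_1,\dots,c_{k-1},\underline{c_k}\}$. $\hat{0}$ denotes an adjoined minimum element. $V=V(\lambda,\underline{m})$ is the set of pointed compositions $\vec{c}=(c_1,\dots,c_{k-1},\underline{m})$ in $C_n^\bullet(F)$ (with last entry exactly $m$) such that, when each $c_i$ ($1\le i\le k-1$) is expressed (uniquely, by the knapsack property) as a sum of parts of $\lambda$, the summands for each $c_i$ are distinct (no value appears twice among the summands of a single $c_i$). *)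

theory Defs
  imports Complex_Main "HOL-Library.Multiset"
begin

definition mobius :: "'a set \<Rightarrow> ('a \<Rightarrow> 'a \<Rightarrow> bool) \<Rightarrow> 'a \<Rightarrow> 'a \<Rightarrow> int" where
  "mobius P le = (THE f.
     (\<forall>x\<in>P. \<forall>y\<in>P. f x y =
        (if x = y then 1
         else if le x y then - (\<Sum>z\<in>{z\<in>P. le x z \<and> le z y \<and> z \<noteq> y}. f x z)
         else 0)) \<and>
     (\<forall>x y. (x \<notin> P \<or> y \<notin> P) \<longrightarrow> f x y = 0))"

definition pointed_partitions :: "nat \<Rightarrow> (nat multiset \<times> nat) set" where
  "pointed_partitions n = {(L, m). 0 \<notin># L \<and> sum_mset L + m = n}"

inductive pp_cover :: "nat multiset \<times> nat \<Rightarrow> nat multiset \<times> nat \<Rightarrow> bool" where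
  merge: "pp_cover (L + {#a, b#}, m) (L + {#a + b#}, m)"
| point: "pp_cover (L + {#a#}, m) (L, a + m)"

definition pp_le :: "nat multiset \<times> nat \<Rightarrow> nat multiset \<times> nat \<Rightarrow> bool" where
  "pp_le = pp_cover\<^sup>*\<^sup>*"

definition pp_filter :: "nat \<Rightarrow> nat multiset \<times> nat \<Rightarrow> (nat multiset \<times> nat) set" where
  "pp_filter n x = {y \<in> pointed_partitions n. pp_le x y}"

definition knapsack :: "nat multiset \<Rightarrow> bool" where
  "knapsack L \<longleftrightarrow>
     card {sum_mset M | M. M \<subseteq># L} = (\<Prod>e\<in>set_mset L. count L e + 1)"

text \<open>A pointed composition (c_1,...,c_{k-1}, c_k pointed) is represented as the pair
(cs, ck) with cs = [c_1,...,c_{k-1}] (positive entries) and ck the last (pointed) entry.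
Its length k is length cs + 1.\<close>

definition pointed_compositions :: "nat \<Rightarrow> (nat list \<times> nat) set" where
  "pointed_compositions n = {(cs, ck). (\<forall>c\<in>set cs. 0 < c) \<and> sum_list cs + ck = n}"

inductive pc_cover :: "nat list \<times> nat \<Rightarrow> nat list \<times> nat \<Rightarrow> bool" where
  adj: "pc_cover (xs @ a # b # ys, c) (xs @ (a + b) # ys, c)"
| last: "pc_cover (xs @ [a], c) (xs, a + c)"

definition pc_le :: "nat list \<times> nat \<Rightarrow> nat list \<times> nat \<Rightarrow> bool" where
  "pc_le = pc_cover\<^sup>*\<^sup>*"

definition ctype :: "nat list \<times> nat \<Rightarrow> nat multiset \<times> nat" where
  "ctype c = (mset (fst c), snd c)"

definition compositions_in :: "nat \<Rightarrow> (nat multiset \<times> nat) set \<Rightarrow> (nat list \<times> nat) set" where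
  "compositions_in n F = {c \<in> pointed_compositions n. ctype c \<in> F}"

text \<open>Adjoining a minimum: None plays the role of 0-hat.\<close>
fun le_hat :: "('a \<Rightarrow> 'a \<Rightarrow> bool) \<Rightarrow> 'a option \<Rightarrow> 'a option \<Rightarrow> bool" where
  "le_hat le None _ = True"
| "le_hat le (Some x) None = False"
| "le_hat le (Some x) (Some y) = le x y"

definition Vset :: "nat \<Rightarrow> nat multiset \<Rightarrow> nat \<Rightarrow> (nat list \<times> nat) set" where
  "Vset n L m = {c \<in> compositions_in n (pp_filter n (L, m)).
      snd c = m \<and>
      (\<forall>i < length (fst c). \<forall>M. M \<subseteq># L \<and> sum_mset M = fst c ! i \<longrightarrow>
          (\<forall>e. count M e \<le> 1))}"

end

theory Submission
  imports Defs "HOL-Library.FuncSet"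
begin

text \<open>
  By the recursion defining \<open>\<mu>\<close>, it suffices to show that the proposed values sum to \<open>-1\<close> over
  every principal ideal \<open>{z \<le> c}\<close> of \<open>C\<^sub>n(F)\<close>.  The knapsack property makes a sub-multiset of
  \<open>\<lambda>\<close> recoverable from its sum; hence \<open>V\<close> is in bijection with the ordered partitions of \<open>\<lambda>\<close>
  into sets (multisets without repetition), and the type of \<open>c\<close> determines blocks
  \<open>\<lambda> = \<lambda>\<^sub>1 + \<dots> + \<lambda>\<^sub>k\<^sub>-\<^sub>1 + \<lambda>\<^sub>0\<close> with \<open>c\<^sub>i = \<Sigma>\<lambda>\<^sub>i\<close> and \<open>\<lambda>\<^sub>0\<close> absorbed into the pointed part.  The
  elements of \<open>V\<close> below \<open>c\<close> are then exactly the concatenations of ordered set partitions of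
  the blocks, their length being the total number of sets.  Since the signed count
  \<open>\<Sigma> (-1)\<^bsup>#sets\<^esup>\<close> of ordered set partitions of a multiset \<open>B\<close> is \<open>(-1)\<^bsup>|B|\<^esup>\<close>, the sum over the
  ideal is \<open>(-1)\<^bsup>p+1\<^esup>(-1)\<^bsup>p\<^esup> = -1\<close>.
\<close>

section \<open>Moebius functions with an adjoined bottom\<close>

definition mobius_rec :: "'a set \<Rightarrow> ('a \<Rightarrow> 'a \<Rightarrow> bool) \<Rightarrow> ('a \<Rightarrow> 'a \<Rightarrow> int) \<Rightarrow> bool" where
  "mobius_rec P le f \<longleftrightarrow>
     (\<forall>x\<in>P. \<forall>y\<in>P. f x y =
        (if x = y then 1
         else if le x y then - (\<Sum>z\<in>{z\<in>P. le x z \<and> le z y \<and> z \<noteq> y}. f x z)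
         else 0)) \<and>
     (\<forall>x y. (x \<notin> P \<or> y \<notin> P) \<longrightarrow> f x y = 0)"

lemma mobius_eq_The_mobius_rec: "mobius P le = (THE f. mobius_rec P le f)"
  unfolding mobius_def mobius_rec_def ..

context
  fixes P :: "'a set" and le :: "'a \<Rightarrow> 'a \<Rightarrow> bool" and r :: "'a \<Rightarrow> nat"
  assumes rank: "\<And>x y. x \<in> P \<Longrightarrow> y \<in> P \<Longrightarrow> le x y \<Longrightarrow> x \<noteq> y \<Longrightarrow> r x < r y"
begin

lemma mobius_rec_unique:
  assumes f: "mobius_rec P le f" and g: "mobius_rec P le g"
  shows "f = g"
proof (intro ext)
  fix x y
  show "f x y = g x y"
  proof (induction y rule: measure_induct_rule[of r])
    case (less y)
    show ?case
    proof (cases "x \<in> P \<and> y \<in> P")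
      case True
      have "(\<Sum>z\<in>{z\<in>P. le x z \<and> le z y \<and> z \<noteq> y}. f x z)
          = (\<Sum>z\<in>{z\<in>P. le x z \<and> le z y \<and> z \<noteq> y}. g x z)"
        using less rank True by (intro sum.cong) auto
      with f g True show ?thesis unfolding mobius_rec_def by simp
    next
      case False
      with f g show ?thesis unfolding mobius_rec_def by auto
    qed
  qed
qed

lemma mobius_rec_exists: "\<exists>f. mobius_rec P le f"
proof -
  define H where "H x g y = (if x \<in> P \<and> y \<in> P then
      (if x = y then 1
       else if le x y then - (\<Sum>z\<in>{z\<in>P. le x z \<and> le z y \<and> z \<noteq> y}. g z)
       else 0) else 0)" for x and g :: "'a \<Rightarrow> int" and y
  define f where "f x = wfrec (measure r) (H x)" for x
  have f_eq: "f x y = H x (f x) y" for x y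
  proof -
    have "f x y = H x (cut (f x) (measure r) y) y"
      unfolding f_def by (rule wfrec) simp
    also have "\<dots> = H x (f x) y"
      using rank unfolding H_def by (auto intro!: sum.cong simp: cut_apply)
    finally show ?thesis .
  qed
  have "mobius_rec P le f"
    unfolding mobius_rec_def by (subst (1 2) f_eq) (auto simp: H_def)
  then show ?thesis by blast
qed

lemma mobius_rec_mobius: "mobius_rec P le (mobius P le)"
proof -
  have "\<exists>!f. mobius_rec P le f"
    using mobius_rec_exists mobius_rec_unique by blast
  then show ?thesis
    unfolding mobius_eq_The_mobius_rec by (rule theI')
qed

end

lemma mobius_adjoined_bottom_eqI:
  fixes Q :: "'a set" and le :: "'a \<Rightarrow> 'a \<Rightarrow> bool" and r :: "'a \<Rightarrow> nat" and f :: "'a \<Rightarrow> int"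
  assumes "finite Q"
    and refl: "\<And>c. c \<in> Q \<Longrightarrow> le c c"
    and rank: "\<And>x y. x \<in> Q \<Longrightarrow> y \<in> Q \<Longrightarrow> le x y \<Longrightarrow> x \<noteq> y \<Longrightarrow> r x < r y"
    and ideal_sum: "\<And>c. c \<in> Q \<Longrightarrow> (\<Sum>z\<in>{z\<in>Q. le z c}. f z) = -1"
    and "c \<in> Q"
  shows "mobius (insert None (Some ` Q)) (le_hat le) None (Some c) = f c"
  using \<open>c \<in> Q\<close>
proof (induction c rule: measure_induct_rule[of r])
  case (less c)
  define P where "P = insert None (Some ` Q)"
  define \<mu> where "\<mu> = mobius P (le_hat le)"
  have "mobius_rec P (le_hat le) \<mu>"
    unfolding \<mu>_def
  proof (rule mobius_rec_mobius[where r = "case_option 0 (Suc \<circ> r)"])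
    fix x y assume "x \<in> P" "y \<in> P" "le_hat le x y" "x \<noteq> y"
    then show "case_option 0 (Suc \<circ> r) x < case_option 0 (Suc \<circ> r) y"
      unfolding P_def using rank by (auto elim!: le_hat.elims) blast
  qed
  then have rec: "\<mu> x y = (if x = y then 1 else if le_hat le x y
      then - (\<Sum>z\<in>{z\<in>P. le_hat le x z \<and> le_hat le z y \<and> z \<noteq> y}. \<mu> x z) else 0)"
    if "x \<in> P" "y \<in> P" for x y
    using that unfolding mobius_rec_def by blast
  define B where "B = {z\<in>Q. le z c \<and> z \<noteq> c}"
  have "finite B" using \<open>finite Q\<close> by (simp add: B_def)
  have below: "{z\<in>P. le_hat le None z \<and> le_hat le z (Some c) \<and> z \<noteq> Some c} = insert None (Some ` B)"
    unfolding P_def B_def by (auto elim: le_hat.elims)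
  have IH: "\<mu> None (Some z) = f z" if "z \<in> B" for z
    using that less.IH rank less.prems unfolding B_def \<mu>_def P_def by blast
  have "\<mu> None (Some c) = - (\<Sum>z\<in>insert None (Some ` B). \<mu> None z)"
    using rec[of None "Some c"] less.prems by (simp only: below) (simp add: P_def)
  also have "\<dots> = - (\<mu> None None + (\<Sum>z\<in>B. \<mu> None (Some z)))"
    using \<open>finite B\<close> by (simp add: sum.reindex)
  also have "\<dots> = - (1 + (\<Sum>z\<in>B. f z))"
    using rec[of None None] IH by (simp add: P_def)
  also have "\<dots> = f c"
  proof -
    have "{z\<in>Q. le z c} = insert c B" using refl less.prems by (auto simp: B_def)
    then show ?thesis
      using ideal_sum[OF less.prems] \<open>finite B\<close> by (simp add: B_def)
  qed
  finally show ?case by (simp add: \<mu>_def P_def)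
qed

section \<open>The orders on pointed compositions and pointed partitions\<close>

lemma pc_le_refl [simp]: "pc_le c c"
  by (simp add: pc_le_def)

lemma pc_le_trans: "pc_le x y \<Longrightarrow> pc_le y z \<Longrightarrow> pc_le x z"
  unfolding pc_le_def by simp

lemma pc_le_length_less:
  assumes "pc_le x y" "x \<noteq> y"
  shows "length (fst y) < length (fst x)"
proof -
  have "x = y \<or> length (fst y) < length (fst x)"
    using \<open>pc_le x y\<close> unfolding pc_le_def
  proof (induction rule: rtranclp_induct)
    case (step y z)
    from step.hyps(2) have "length (fst z) < length (fst y)" by cases auto
    with step.IH show ?case by auto
  qed simp
  with assms(2) show ?thesis by simp
qed

lemma pc_le_absorb_last: "pc_le (p @ ws, a) (p, sum_list ws + a)"
proof (induction ws arbitrary: a rule: rev_induct)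
  case (snoc w ws)
  have "pc_cover ((p @ ws) @ [w], a) (p @ ws, w + a)" by (rule pc_cover.last)
  with snoc.IH[of "w + a"] show ?case
    unfolding pc_le_def by (simp add: ac_simps)
qed simp

lemma pc_le_merge_block: "ys \<noteq> [] \<Longrightarrow> pc_le (p @ ys @ s, b) (p @ sum_list ys # s, b)"
proof (induction ys arbitrary: p)
  case (Cons y ys)
  show ?case
  proof (cases "ys = []")
    case False
    have "pc_le ((p @ [y]) @ ys @ s, b) ((p @ [y]) @ sum_list ys # s, b)"
      using Cons.IH False by blast
    moreover have "pc_cover (p @ y # sum_list ys # s, b) (p @ (y + sum_list ys) # s, b)"
      by (rule pc_cover.adj)
    ultimately show ?thesis unfolding pc_le_def by simp
  qed simp
qed simp

lemma pc_le_merge_blocks: "[] \<notin> set yss \<Longrightarrow> pc_le (p @ concat yss, b) (p @ map sum_list yss, b)"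
proof (induction yss arbitrary: p)
  case (Cons ys yss)
  have "pc_le (p @ ys @ concat yss, b) (p @ sum_list ys # concat yss, b)"
    using Cons.prems by (intro pc_le_merge_block) auto
  moreover have "pc_le ((p @ [sum_list ys]) @ concat yss, b) ((p @ [sum_list ys]) @ map sum_list yss, b)"
    using Cons.IH[of "p @ [sum_list ys]"] Cons.prems by simp
  ultimately show ?case by (auto intro: pc_le_trans)
qed simp

lemma pc_le_iff:
  "pc_le z c \<longleftrightarrow> (\<exists>yss ws. fst z = concat yss @ ws \<and> fst c = map sum_list yss \<and> [] \<notin> set yss
      \<and> snd c = sum_list ws + snd z)"
  (is "_ \<longleftrightarrow> ?blocks z c")
proof
  show "?blocks z c" if "pc_le z c"
    using that unfolding pc_le_def
  proof (induction rule: rtranclp_induct)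
    case base
    show ?case
      by (rule exI[of _ "map (\<lambda>x. [x]) (fst z)"], rule exI[of _ "[]"]) (auto simp: map_idI)
  next
    case (step y w)
    from step.IH obtain yss ws where z: "fst z = concat yss @ ws" "fst y = map sum_list yss"
      "[] \<notin> set yss" "snd y = sum_list ws + snd z" by blast
    from step.hyps(2) show ?case
    proof cases
      case (adj xs a b ys)
      with z have "map sum_list yss = xs @ a # b # ys" by simp
      then obtain yss1 ya yb yss2 where "yss = yss1 @ ya # yb # yss2" "map sum_list yss1 = xs"
        "sum_list ya = a" "sum_list yb = b" "map sum_list yss2 = ys"
        by (auto simp: map_eq_append_conv)
      with z adj show ?thesis by (intro exI[of _ "yss1 @ (ya @ yb) # yss2"] exI[of _ ws]) auto
    next
      case (last xs a)
      with z have "map sum_list yss = xs @ [a]" by simp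
      then obtain yss1 ya where "yss = yss1 @ [ya]" "map sum_list yss1 = xs" "sum_list ya = a"
        by (auto simp: map_eq_append_conv)
      with z last show ?thesis by (intro exI[of _ yss1] exI[of _ "ya @ ws"]) auto
    qed
  qed
  show "pc_le z c" if "?blocks z c"
  proof -
    from that obtain yss ws where c: "fst z = concat yss @ ws" "fst c = map sum_list yss"
      "[] \<notin> set yss" "snd c = sum_list ws + snd z" by blast
    have "pc_le (concat yss @ ws, snd z) (concat yss, snd c)"
      using pc_le_absorb_last c(4) by simp
    moreover have "pc_le (concat yss, snd c) (map sum_list yss, snd c)"
      using pc_le_merge_blocks[of yss "[]"] c(3) by simp
    ultimately show ?thesis
      using c(1,2) by (metis pc_le_trans prod.collapse)
  qed
qed

lemma length_le_sum_list_pos: "\<forall>c\<in>set cs. 0 < (c::nat) \<Longrightarrow> length cs \<le> sum_list cs"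
  by (induction cs) auto

lemma pointed_composition_length_le: "c \<in> pointed_compositions n \<Longrightarrow> length (fst c) \<le> n"
  unfolding pointed_compositions_def using length_le_sum_list_pos by fastforce

lemma finite_pointed_compositions: "finite (pointed_compositions n)"
proof -
  have "pointed_compositions n \<subseteq> {cs. set cs \<subseteq> {0..n} \<and> length cs \<le> n} \<times> {0..n}"
    unfolding pointed_compositions_def using length_le_sum_list_pos member_le_sum_list by fastforce
  then show ?thesis
    by (rule finite_subset) (simp add: finite_lists_length_le)
qed

lemma finite_compositions_in: "finite (compositions_in n F)"
  by (rule finite_subset[OF _ finite_pointed_compositions]) (auto simp: compositions_in_def)

lemma pp_le_trans: "pp_le x y \<Longrightarrow> pp_le y z \<Longrightarrow> pp_le x z"
  unfolding pp_le_def by simp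

lemma pp_le_absorb: "pp_le (A + R, m) (A, m + sum_mset R)"
proof (induction R arbitrary: m)
  case (add a R)
  have "pp_cover (A + R + {#a#}, m) (A + R, a + m)" by (rule pp_cover.point)
  with add.IH[of "a + m"] show ?case
    unfolding pp_le_def by (simp add: ac_simps)
qed (simp add: pp_le_def)

lemma pp_le_merge_block: "g \<noteq> {#} \<Longrightarrow> pp_le (g + X, m) (add_mset (sum_mset g) X, m)"
proof (induction g arbitrary: X)
  case (add a g)
  show ?case
  proof (cases "g = {#}")
    case False
    have "pp_le (g + add_mset a X, m) (add_mset (sum_mset g) (add_mset a X), m)"
      using add.IH False by blast
    moreover have "pp_cover (X + {#a, sum_mset g#}, m) (X + {#a + sum_mset g#}, m)"
      by (rule pp_cover.merge)
    ultimately show ?thesis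
      unfolding pp_le_def by (simp add: add_mset_commute)
  qed (simp add: pp_le_def)
qed simp

lemma pp_le_merge_blocks: "{#} \<notin># G \<Longrightarrow> pp_le (sum_mset G + X, m) (image_mset sum_mset G + X, m)"
proof (induction G arbitrary: X)
  case (add g G)
  have "pp_le (g + (sum_mset G + X), m) (add_mset (sum_mset g) (sum_mset G + X), m)"
    using add.prems by (intro pp_le_merge_block) auto
  moreover have "pp_le (sum_mset G + add_mset (sum_mset g) X, m)
      (image_mset sum_mset G + add_mset (sum_mset g) X, m)"
    using add.IH[of "add_mset (sum_mset g) X"] add.prems by simp
  ultimately show ?case by (auto simp: ac_simps intro: pp_le_trans)
qed (simp add: pp_le_def)

lemma pp_le_iff:
  "pp_le x y \<longleftrightarrow> (\<exists>G R. fst x = sum_mset G + R \<and> fst y = image_mset sum_mset G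
     \<and> snd y = snd x + sum_mset R \<and> {#} \<notin># G)"
  (is "_ \<longleftrightarrow> ?groups x y")
proof
  show "?groups x y" if "pp_le x y"
    using that unfolding pp_le_def
  proof (induction rule: rtranclp_induct)
    case base
    have "sum_mset (image_mset (\<lambda>a. {#a#}) A) = A" for A :: "nat multiset"
      by (induction A) auto
    then show ?case
      by (intro exI[of _ "image_mset (\<lambda>a. {#a#}) (fst x)"] exI[of _ "{#}"])
        (auto simp: multiset.map_comp comp_def)
  next
    case (step y w)
    from step.IH obtain G R where x: "fst x = sum_mset G + R" "fst y = image_mset sum_mset G"
      "snd y = snd x + sum_mset R" "{#} \<notin># G" by blast
    from step.hyps(2) show ?case
    proof cases
      case (merge L a b)
      with x have "image_mset sum_mset G = add_mset a (add_mset b L)" by simp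
      then obtain G' ga gb where "G = G' + {#ga, gb#}" "image_mset sum_mset G' = L"
          "sum_mset ga = a" "sum_mset gb = b"
        by (auto dest!: msed_map_invR)
      with x merge show ?thesis
        by (intro exI[of _ "add_mset (ga + gb) G'"] exI[of _ R]) auto
    next
      case (point L a)
      with x have "image_mset sum_mset G = add_mset a L" by simp
      then obtain G' ga where "G = add_mset ga G'" "image_mset sum_mset G' = L" "sum_mset ga = a"
        by (auto dest!: msed_map_invR)
      with x point show ?thesis
        by (intro exI[of _ G'] exI[of _ "R + ga"]) (auto simp: ac_simps)
    qed
  qed
  show "pp_le x y" if "?groups x y"
  proof -
    from that obtain G R where x: "fst x = sum_mset G + R" "fst y = image_mset sum_mset G"
      "snd y = snd x + sum_mset R" "{#} \<notin># G" by blast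
    have "pp_le (sum_mset G + R, snd x) (sum_mset G, snd y)"
      using pp_le_absorb x(3) by simp
    moreover have "pp_le (sum_mset G, snd y) (image_mset sum_mset G, snd y)"
      using pp_le_merge_blocks[of G "{#}"] x(4) by simp
    ultimately show ?thesis
      using x(1,2) by (metis pp_le_trans prod.collapse)
  qed
qed

lemma image_mset_eq_mset_obtain_list:
  assumes "image_mset f A = mset ys"
  obtains xs where "mset xs = A" "map f xs = ys"
  using assms
proof (induction ys arbitrary: A thesis)
  case (Cons y ys)
  then obtain x A' where "A = add_mset x A'" "f x = y" "image_mset f A' = mset ys"
    by (auto dest!: msed_map_invR)
  with Cons.IH[of A'] Cons.prems(1)[of "x # _"] show ?case by auto
qed simp

section \<open>Knapsack partitions\<close>

lemma bij_betw_submultisets_PiE: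
  "bij_betw (\<lambda>M. restrict (count M) (set_mset L)) {M. M \<subseteq># L}
     (PiE (set_mset L) (\<lambda>e. {0..count L e}))"
proof (rule bij_betwI')
  fix M M' assume "M \<in> {M. M \<subseteq># L}" "M' \<in> {M. M \<subseteq># L}"
  then have outside: "count M e = 0" "count M' e = 0" if "e \<notin># L" for e
    using that by (simp_all add: subseteq_mset_def not_in_iff) (metis le_0_eq)+
  show "(restrict (count M) (set_mset L) = restrict (count M') (set_mset L)) = (M = M')"
  proof
    assume eq: "restrict (count M) (set_mset L) = restrict (count M') (set_mset L)"
    have "count M e = count M' e" for e
      using fun_cong[OF eq, of e] outside by (cases "e \<in># L") auto
    then show "M = M'" by (rule multiset_eqI)
  qed simp
next
  fix M assume "M \<in> {M. M \<subseteq># L}"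
  then show "restrict (count M) (set_mset L) \<in> PiE (set_mset L) (\<lambda>e. {0..count L e})"
    by (auto simp: subseteq_mset_def)
next
  fix g assume g: "g \<in> PiE (set_mset L) (\<lambda>e. {0..count L e})"
  define M where "M = (\<Sum>e\<in>set_mset L. replicate_mset (g e) e)"
  have count_M: "count M x = (if x \<in># L then g x else 0)" for x
    unfolding M_def count_sum by (simp add: count_replicate_mset)
  have "M \<subseteq># L" unfolding subseteq_mset_def using g count_M by auto
  moreover have "g = restrict (count M) (set_mset L)"
    using g count_M by (auto simp: PiE_def extensional_def)
  ultimately show "\<exists>M\<in>{M. M \<subseteq># L}. g = restrict (count M) (set_mset L)" by blast
qed

lemma finite_submultisets: "finite {M. M \<subseteq># L}"
  using bij_betw_finite[OF bij_betw_submultisets_PiE] by (simp add: finite_PiE)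

lemma card_submultisets: "card {M. M \<subseteq># L} = (\<Prod>e\<in>set_mset L. count L e + 1)"
  using bij_betw_same_card[OF bij_betw_submultisets_PiE] by (simp add: card_PiE)

lemma knapsack_inj_on_sum_mset:
  assumes "knapsack L"
  shows "inj_on sum_mset {M. M \<subseteq># L}"
proof (rule eq_card_imp_inj_on[OF finite_submultisets])
  show "card (sum_mset ` {M. M \<subseteq># L}) = card {M. M \<subseteq># L}"
    using assms unfolding knapsack_def card_submultisets by (simp add: setcompr_eq_image)
qed

section \<open>Ordered partitions of a multiset into sets\<close>

text \<open>A set is modelled as a nonempty multiset without repeated elements.\<close>

definition set_compositions :: "'a multiset \<Rightarrow> 'a multiset list set" where
  "set_compositions B = {Ns. sum_list Ns = B \<and> (\<forall>N\<in>set Ns. N \<noteq> {#} \<and> (\<forall>e. count N e \<le> 1))}"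

definition set_composition_lists :: "'a multiset list \<Rightarrow> 'a multiset list list set" where
  "set_composition_lists Bs = {Nss. list_all2 (\<lambda>Ns B. Ns \<in> set_compositions B) Nss Bs}"

lemma in_set_subset_mset_sum_list: "N \<in> set Ns \<Longrightarrow> N \<subseteq># sum_list Ns"
  by (induction Ns) (auto intro: subset_mset.order_trans)

lemma sum_list_eq_empty_mset_iff: "sum_list Ns = {#} \<longleftrightarrow> (\<forall>N\<in>set Ns. N = {#})"
  by (induction Ns) auto

lemma length_le_size_sum_list: "\<forall>N\<in>set Ns. N \<noteq> {#} \<Longrightarrow> length Ns \<le> size (sum_list Ns)"
  by (induction Ns) (auto simp: Suc_le_eq nonempty_has_size)

lemma finite_set_compositions: "finite (set_compositions B)"
proof -
  have "set_compositions B \<subseteq> {Ns. set Ns \<subseteq> {M. M \<subseteq># B} \<and> length Ns \<le> size B}"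
    unfolding set_compositions_def
    using in_set_subset_mset_sum_list length_le_size_sum_list by fastforce
  then show ?thesis
    by (rule finite_subset) (simp add: finite_lists_length_le finite_submultisets)
qed

lemma set_compositions_empty: "set_compositions {#} = {[]}"
  by (auto simp: set_compositions_def sum_list_eq_empty_mset_iff neq_Nil_conv)

lemma set_compositions_nonempty:
  assumes "B \<noteq> {#}"
  shows "set_compositions B = (\<lambda>(N, Ns). N # Ns) `
    (SIGMA N:{N. N \<noteq> {#} \<and> (\<forall>e. count N e \<le> 1) \<and> N \<subseteq># B}. set_compositions (B - N))"
proof (intro equalityI subsetI)
  fix Ns assume "Ns \<in> set_compositions B"
  with assms obtain N Ns' where "Ns = N # Ns'"
    unfolding set_compositions_def by (cases Ns) auto
  with \<open>Ns \<in> set_compositions B\<close> show "Ns \<in> (\<lambda>(N, Ns). N # Ns) `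
      (SIGMA N:{N. N \<noteq> {#} \<and> (\<forall>e. count N e \<le> 1) \<and> N \<subseteq># B}. set_compositions (B - N))"
    unfolding set_compositions_def by (auto intro!: image_eqI[of _ _ "(N, Ns')"])
qed (auto simp: set_compositions_def subset_mset.add_diff_inverse)

lemma sum_Pow_minus_one_power_card:
  assumes "finite S" "S \<noteq> {}"
  shows "(\<Sum>A\<in>Pow S. (-1::int) ^ card A) = 0"
proof (rule sum_alternating_cancels)
  have "{} \<subset> S" using assms(2) by blast
  from card_subsupersets_even_odd[OF assms(1) this]
  show "card {A. A \<in> Pow S \<and> even (card A)} = card {A. A \<in> Pow S \<and> odd (card A)}"
    by simp
qed (use assms in simp)

lemma sum_nonempty_subsets_sign:
  assumes "B \<noteq> {#}"
  shows "(\<Sum>N\<in>{N. N \<noteq> {#} \<and> (\<forall>e. count N e \<le> 1) \<and> N \<subseteq># B}. (-1::int) ^ size N) = -1"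
proof -
  have sets: "{N. N \<noteq> {#} \<and> (\<forall>e. count N e \<le> 1) \<and> N \<subseteq># B} = mset_set ` (Pow (set_mset B) - {{}})"
  proof (intro equalityI subsetI)
    fix N assume N: "N \<in> {N. N \<noteq> {#} \<and> (\<forall>e. count N e \<le> 1) \<and> N \<subseteq># B}"
    then have "count N e = count (mset_set (set_mset N)) e" for e
      by (cases "e \<in># N") (auto simp: not_in_iff intro: le_antisym)
    then have "N = mset_set (set_mset N)" by (rule multiset_eqI)
    with N show "N \<in> mset_set ` (Pow (set_mset B) - {{}})"
      by (auto dest: set_mset_mono)
  next
    fix N assume "N \<in> mset_set ` (Pow (set_mset B) - {{}})"
    then obtain A where "A \<subseteq> set_mset B" "A \<noteq> {}" "N = mset_set A" by auto
    moreover from this have "finite A" using finite_subset by blast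
    ultimately show "N \<in> {N. N \<noteq> {#} \<and> (\<forall>e. count N e \<le> 1) \<and> N \<subseteq># B}"
      by (auto simp: count_mset_set' mset_set_empty_iff subseteq_mset_def Suc_le_eq subsetD)
  qed
  have finite: "finite A" if "A \<in> Pow (set_mset B)" for A
    using that finite_subset by auto
  have "inj_on mset_set (Pow (set_mset B) - {{}})"
    using finite by (intro inj_onI) (metis DiffD1 finite_set_mset_mset_set)
  then have "(\<Sum>N\<in>{N. N \<noteq> {#} \<and> (\<forall>e. count N e \<le> 1) \<and> N \<subseteq># B}. (-1::int) ^ size N)
      = (\<Sum>A\<in>Pow (set_mset B) - {{}}. (-1) ^ card A)"
    unfolding sets using finite by (simp add: sum.reindex)
  also have "\<dots> = (\<Sum>A\<in>Pow (set_mset B). (-1) ^ card A) - 1"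
    by (simp add: sum_diff1)
  also have "\<dots> = -1"
    using assms by (simp add: sum_Pow_minus_one_power_card)
  finally show ?thesis .
qed

lemma sum_set_compositions_sign:
  "(\<Sum>Ns\<in>set_compositions B. (-1::int) ^ length Ns) = (-1) ^ size B"
proof (induction "size B" arbitrary: B rule: less_induct)
  case less
  show ?case
  proof (cases "B = {#}")
    case False
    define S where "S = {N. N \<noteq> {#} \<and> (\<forall>e. count N e \<le> 1) \<and> N \<subseteq># B}"
    have "finite S"
      unfolding S_def by (rule finite_subset[OF _ finite_submultisets]) auto
    have size_B: "size B = size (B - N) + size N" and smaller: "size (B - N) < size B"
      if "N \<in> S" for N
    proof -
      from that have "N \<subseteq># B" "0 < size N" by (auto simp: S_def nonempty_has_size)
      with size_mset_mono[of N B] show "size B = size (B - N) + size N" "size (B - N) < size B"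
        by (simp_all add: size_Diff_submset)
    qed
    have "(\<Sum>Ns\<in>set_compositions B. (-1::int) ^ length Ns)
        = (\<Sum>(N, Ns)\<in>(SIGMA N:S. set_compositions (B - N)). (-1) ^ length (N # Ns))"
      unfolding set_compositions_nonempty[OF False] S_def[symmetric]
      by (subst sum.reindex) (auto simp: inj_on_def case_prod_unfold)
    also have "\<dots> = (\<Sum>N\<in>S. - (\<Sum>Ns\<in>set_compositions (B - N). (-1) ^ length Ns))"
      using \<open>finite S\<close> finite_set_compositions
      by (subst sum.Sigma[symmetric]) (auto simp: sum_negf)
    also have "\<dots> = (\<Sum>N\<in>S. - ((-1) ^ size B * (-1) ^ size N))"
      using less smaller size_B by (intro sum.cong refl) (simp add: power_add)
    also have "\<dots> = - ((-1) ^ size B * (\<Sum>N\<in>S. (-1) ^ size N))"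
      by (simp add: sum_negf sum_distrib_left)
    also have "\<dots> = (-1) ^ size B"
      using sum_nonempty_subsets_sign[OF False] by (simp add: S_def)
    finally show ?thesis .
  qed (simp add: set_compositions_empty)
qed

lemma set_composition_lists_Nil: "set_composition_lists [] = {[]}"
  by (auto simp: set_composition_lists_def)

lemma set_composition_lists_Cons:
  "set_composition_lists (B # Bs) = (\<lambda>(Ns, Nss). Ns # Nss) ` (set_compositions B \<times> set_composition_lists Bs)"
  by (auto simp: set_composition_lists_def list_all2_Cons2)

lemma sum_set_composition_lists_sign:
  "(\<Sum>Nss\<in>set_composition_lists Bs. (-1::int) ^ length (concat Nss)) = (-1) ^ size (sum_list Bs)"
proof (induction Bs)
  case (Cons B Bs)
  have "(\<Sum>Nss\<in>set_composition_lists (B # Bs). (-1::int) ^ length (concat Nss))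
      = (\<Sum>(Ns, Nss)\<in>set_compositions B \<times> set_composition_lists Bs.
           (-1) ^ length Ns * (-1) ^ length (concat Nss))"
    unfolding set_composition_lists_Cons
    by (subst sum.reindex) (auto simp: inj_on_def case_prod_unfold power_add)
  also have "\<dots> = (\<Sum>Ns\<in>set_compositions B. (-1) ^ length Ns)
      * (\<Sum>Nss\<in>set_composition_lists Bs. (-1) ^ length (concat Nss))"
    by (simp add: sum_product sum.cartesian_product)
  also have "\<dots> = (-1) ^ size (sum_list (B # Bs))"
    using Cons.IH by (simp add: sum_set_compositions_sign power_add)
  finally show ?case .
qed (simp add: set_composition_lists_Nil)

lemma set_compositions_append:
  "Ns \<in> set_compositions A \<Longrightarrow> Ms \<in> set_compositions B \<Longrightarrow> Ns @ Ms \<in> set_compositions (A + B)"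
  by (auto simp: set_compositions_def)

lemma concat_in_set_compositions:
  "Nss \<in> set_composition_lists Bs \<Longrightarrow> concat Nss \<in> set_compositions (sum_list Bs)"
proof (induction Bs arbitrary: Nss)
  case Nil
  then show ?case by (simp add: set_composition_lists_Nil set_compositions_empty)
next
  case (Cons B Bs)
  then show ?case
    by (auto simp: set_composition_lists_Cons intro!: set_compositions_append)
qed

text \<open>Nonemptiness of the sets is what makes the cut points of the concatenation unique.\<close>

lemma concat_append_set_composition_lists_eqD:
  assumes "Nss \<in> set_composition_lists Bs" "Nss' \<in> set_composition_lists Bs"
    and "concat Nss @ r = concat Nss' @ r'"
  shows "Nss = Nss' \<and> r = r'"
  using assms
proof (induction Bs arbitrary: Nss Nss')
  case (Cons B Bs)
  then obtain Ns Ms Nss0 Mss0 where split: "Nss = Ns # Nss0" "Nss' = Ms # Mss0"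
      "Ns \<in> set_compositions B" "Ms \<in> set_compositions B"
      "Nss0 \<in> set_composition_lists Bs" "Mss0 \<in> set_composition_lists Bs"
    by (auto simp: set_composition_lists_Cons)
  from Cons.prems(3) split(1,2) have "Ns @ (concat Nss0 @ r) = Ms @ (concat Mss0 @ r')" by simp
  then obtain us where us:
    "(Ns = Ms @ us \<and> us @ concat Nss0 @ r = concat Mss0 @ r')
      \<or> (Ns @ us = Ms \<and> concat Nss0 @ r = us @ concat Mss0 @ r')"
    using append_eq_append_conv2[of Ns "concat Nss0 @ r" Ms "concat Mss0 @ r'"] by blast
  have "us = []"
  proof -
    have "sum_list Ns = sum_list Ms" "\<forall>N\<in>set Ns \<union> set Ms. N \<noteq> {#}"
      using split(3,4) by (auto simp: set_compositions_def)
    with us have "sum_list us = {#}" "\<forall>N\<in>set us. N \<noteq> {#}"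
      by auto
    then show ?thesis by (cases us) auto
  qed
  with us have "Ns = Ms" "concat Nss0 @ r = concat Mss0 @ r'"
    by simp_all
  with Cons.IH[OF split(5,6)] split(1,2) show ?case by simp
qed (simp add: set_composition_lists_Nil)

section \<open>The set \<open>V\<close> and its elements below a composition\<close>

lemma sum_list_map_sum_mset: "sum_list (map sum_mset Ns) = sum_mset (sum_list Ns)"
  by (induction Ns) auto

lemma sum_list_concat: "sum_list (concat xss) = sum_list (map sum_list (xss :: 'a::monoid_add list list))"
  by (induction xss) auto

lemma sum_mset_pos: "N \<noteq> {#} \<Longrightarrow> 0 \<notin># N \<Longrightarrow> 0 < sum_mset (N :: nat multiset)"
  by (metis gr0I multiset_nonemptyE sum_mset_0_iff)

context
  fixes n m :: nat and L :: "nat multiset"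
  assumes partition: "(L, m) \<in> pointed_partitions n"
    and knapsack: "knapsack L"
begin

lemma set_composition_in_Vset:
  assumes "xs \<in> set_compositions L"
  shows "(map sum_mset xs, m) \<in> Vset n L m"
proof -
  have xs: "sum_list xs = L" "\<And>N. N \<in> set xs \<Longrightarrow> N \<noteq> {#} \<and> (\<forall>e. count N e \<le> 1)"
    using assms by (auto simp: set_compositions_def)
  have sub: "N \<subseteq># L" if "N \<in> set xs" for N
    using in_set_subset_mset_sum_list[OF that] xs(1) by simp
  have pos: "0 < sum_mset N" if "N \<in> set xs" for N
    using partition xs(2)[OF that] sub[OF that]
    by (intro sum_mset_pos) (auto simp: pointed_partitions_def dest: mset_subset_eqD)
  have sum: "sum_list (map sum_mset xs) + m = n"
    using partition xs(1) by (simp add: sum_list_map_sum_mset pointed_partitions_def)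
  have "pp_le (L, m) (image_mset sum_mset (mset xs), m)"
    unfolding pp_le_iff using xs by (intro exI[of _ "mset xs"] exI[of _ "{#}"]) (auto simp: sum_mset_sum_list)
  then have "(map sum_mset xs, m) \<in> compositions_in n (pp_filter n (L, m))"
    using pos sum
    by (fastforce simp: compositions_in_def pointed_compositions_def pp_filter_def ctype_def
        pointed_partitions_def sum_mset_sum_list simp del: sum_mset_0_iff)
  moreover have "\<forall>e. count M e \<le> 1"
    if "i < length xs" "M \<subseteq># L" "sum_mset M = sum_mset (xs ! i)" for i M
  proof -
    have "xs ! i \<in> set xs" using that(1) by simp
    with that knapsack_inj_on_sum_mset[OF knapsack] sub have "M = xs ! i"
      by (auto dest: inj_onD)
    with xs(2)[OF \<open>xs ! i \<in> set xs\<close>] show ?thesis by simp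
  qed
  ultimately show ?thesis by (simp add: Vset_def)
qed

lemma Vset_obtain_set_composition:
  assumes "z \<in> Vset n L m"
  obtains xs where "xs \<in> set_compositions L" "z = (map sum_mset xs, m)"
proof -
  obtain zs where z: "z = (zs, m)"
    using assms by (cases z) (simp add: Vset_def)
  have "pp_le (L, m) (mset zs, m)"
    using assms z by (simp add: Vset_def compositions_in_def pp_filter_def ctype_def)
  then obtain G R where G: "L = sum_mset G + R" "mset zs = image_mset sum_mset G"
      "sum_mset R = 0" "{#} \<notin># G"
    unfolding pp_le_iff by auto
  have "R = {#}"
  proof (rule ccontr)
    assume "R \<noteq> {#}"
    then obtain x where "x \<in># R" by blast
    with G(3) have "0 \<in># R" by (metis sum_mset_0_iff)
    then have "0 \<in># L" by (simp add: G(1))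
    with partition show False by (simp add: pointed_partitions_def)
  qed
  obtain xs where xs: "mset xs = G" "map sum_mset xs = zs"
    using image_mset_eq_mset_obtain_list[OF G(2)[symmetric]] by blast
  have "sum_list xs = L"
    using G(1) xs(1) \<open>R = {#}\<close> by (simp flip: sum_mset_sum_list)
  moreover have "N \<noteq> {#} \<and> (\<forall>e. count N e \<le> 1)" if N: "N \<in> set xs" for N
  proof
    show "N \<noteq> {#}" using N xs(1) G(4) by auto
    obtain i where "i < length xs" "xs ! i = N"
      using N by (auto simp: in_set_conv_nth)
    moreover have "N \<subseteq># L"
      using in_set_subset_mset_sum_list[OF N] \<open>sum_list xs = L\<close> by simp
    ultimately show "\<forall>e. count N e \<le> 1"
      using assms z xs(2) by (auto simp: Vset_def)
  qed
  ultimately have "xs \<in> set_compositions L"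
    by (simp add: set_compositions_def)
  with that z xs(2) show ?thesis by blast
qed

lemma bij_betw_set_compositions_Vset:
  "bij_betw (\<lambda>xs. (map sum_mset xs, m)) (set_compositions L) (Vset n L m)"
proof (rule bij_betw_imageI)
  have "set xs \<subseteq> {M. M \<subseteq># L}" if "xs \<in> set_compositions L" for xs
    using that in_set_subset_mset_sum_list by (fastforce simp: set_compositions_def)
  then show "inj_on (\<lambda>xs. (map sum_mset xs, m)) (set_compositions L)"
    using inj_on_subset[OF knapsack_inj_on_sum_mset[OF knapsack]]
    by (intro inj_onI) (simp add: inj_on_map_eq_map)
  show "(\<lambda>xs. (map sum_mset xs, m)) ` set_compositions L = Vset n L m"
    using set_composition_in_Vset Vset_obtain_set_composition by blast
qed

end

lemma map_eq_concat_append_obtain: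
  assumes "map f xs = concat yss @ ws"
  obtains xss xs0 where "xs = concat xss @ xs0" "map (map f) xss = yss" "map f xs0 = ws"
  using assms
proof (induction yss arbitrary: xs thesis)
  case Nil
  then show ?case by simp
next
  case (Cons ys yss)
  from Cons.prems(2) have "map f xs = ys @ concat yss @ ws" by simp
  then obtain as bs where "xs = as @ bs" "ys = map f as" "concat yss @ ws = map f bs"
    unfolding map_eq_append_conv by blast
  moreover obtain xss xs0 where "bs = concat xss @ xs0" "map (map f) xss = yss" "map f xs0 = ws"
    using Cons.IH[of bs] \<open>concat yss @ ws = map f bs\<close> by metis
  ultimately show ?case
    using Cons.prems(1)[of "as # xss" xs0] by simp
qed

lemma set_composition_below_blocks_iff:
  assumes knapsack: "knapsack L" and L: "L = sum_list Ls + L0" and blocks: "{#} \<notin> set Ls"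
    and xs: "xs \<in> set_compositions L"
  shows "pc_le (map sum_mset xs, m) (map sum_mset Ls, m + sum_mset L0) \<longleftrightarrow>
    (\<exists>Nss N0s. xs = concat Nss @ N0s \<and> Nss \<in> set_composition_lists Ls \<and> N0s \<in> set_compositions L0)"
proof
  assume "pc_le (map sum_mset xs, m) (map sum_mset Ls, m + sum_mset L0)"
  then obtain yss ws where yss: "map sum_mset xs = concat yss @ ws" "map sum_mset Ls = map sum_list yss"
      "sum_list ws = sum_mset L0"
    by (auto simp: pc_le_iff)
  obtain Nss N0s where split: "xs = concat Nss @ N0s" "map (map sum_mset) Nss = yss"
      "map sum_mset N0s = ws"
    using yss(1) by (rule map_eq_concat_append_obtain)
  have pieces: "sum_list (map sum_list Nss) + sum_list N0s = L"
    using xs split(1) by (simp add: set_compositions_def sum_list_concat)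
  have in_xs: "N \<noteq> {#} \<and> (\<forall>e. count N e \<le> 1)" if "N \<in> set (concat Nss @ N0s)" for N
    using xs that split(1) by (simp add: set_compositions_def)
  have piece_eq: "sum_list Ns = B"
    if "sum_list Ns \<subseteq># L" "B \<subseteq># L" "sum_list (map sum_mset Ns) = sum_mset B" for Ns B
    using that knapsack_inj_on_sum_mset[OF knapsack] by (auto simp: sum_list_map_sum_mset dest: inj_onD)
  have "Nss \<in> set_composition_lists Ls"
    unfolding set_composition_lists_def mem_Collect_eq
  proof (rule list_all2_all_nthI)
    have "length yss = length Nss" "length Ls = length yss"
      using arg_cong[OF split(2), of length] arg_cong[OF yss(2), of length] by simp_all
    then show len: "length Nss = length Ls" by simp
    fix i assume i: "i < length Nss"
    then have "sum_list (Nss ! i) \<subseteq># sum_list (map sum_list Nss)"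
      by (intro in_set_subset_mset_sum_list) simp
    moreover have "sum_list (map sum_list Nss) \<subseteq># L"
      using pieces mset_subset_eq_add_left[of "sum_list (map sum_list Nss)" "sum_list N0s"] by simp
    ultimately have "sum_list (Nss ! i) \<subseteq># L"
      by (rule subset_mset.order_trans)
    moreover have "Ls ! i \<subseteq># sum_list Ls"
      using i len by (intro in_set_subset_mset_sum_list) simp
    then have "Ls ! i \<subseteq># L"
      using L mset_subset_eq_add_left[of "sum_list Ls" L0] by (auto intro: subset_mset.order_trans)
    moreover have "sum_list (map sum_mset (Nss ! i)) = sum_mset (Ls ! i)"
    proof -
      have "map sum_mset Ls ! i = map sum_list yss ! i" by (simp only: yss(2))
      with i len show ?thesis by (simp flip: split(2))
    qed
    moreover have "N \<noteq> {#} \<and> (\<forall>e. count N e \<le> 1)" if "N \<in> set (Nss ! i)" for N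
      using in_xs that nth_mem[OF i] by auto
    ultimately show "Nss ! i \<in> set_compositions (Ls ! i)"
      using piece_eq by (simp add: set_compositions_def)
  qed
  moreover have "N0s \<in> set_compositions L0"
  proof -
    have "sum_list N0s \<subseteq># L" "L0 \<subseteq># L"
      using pieces L by (metis mset_subset_eq_add_right)+
    moreover have "sum_list (map sum_mset N0s) = sum_mset L0"
      using split(3) yss(3) by simp
    moreover have "N \<noteq> {#} \<and> (\<forall>e. count N e \<le> 1)" if "N \<in> set N0s" for N
      using in_xs that by auto
    ultimately show ?thesis
      using piece_eq by (simp add: set_compositions_def)
  qed
  ultimately show "\<exists>Nss N0s. xs = concat Nss @ N0s \<and> Nss \<in> set_composition_lists Ls
      \<and> N0s \<in> set_compositions L0"
    using split(1) by blast
next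
  assume "\<exists>Nss N0s. xs = concat Nss @ N0s \<and> Nss \<in> set_composition_lists Ls \<and> N0s \<in> set_compositions L0"
  then obtain Nss N0s where split: "xs = concat Nss @ N0s" "Nss \<in> set_composition_lists Ls"
      "N0s \<in> set_compositions L0"
    by blast
  let ?yss = "map (map sum_mset) Nss"
  have "map sum_list ?yss = map sum_mset Ls \<and> [] \<notin> set ?yss"
    using split(2) blocks unfolding set_composition_lists_def mem_Collect_eq
    by (induction rule: list_all2_induct) (auto simp: set_compositions_def sum_list_map_sum_mset)
  moreover have "sum_list (map sum_mset N0s) = sum_mset L0"
    using split(3) by (simp add: set_compositions_def sum_list_map_sum_mset)
  moreover have "map sum_mset xs = concat ?yss @ map sum_mset N0s"
    using split(1) by (simp add: map_concat)
  ultimately show "pc_le (map sum_mset xs, m) (map sum_mset Ls, m + sum_mset L0)"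
    unfolding pc_le_iff by (intro exI[of _ ?yss] exI[of _ "map sum_mset N0s"]) simp
qed

lemma sum_Vset_below_blocks_sign:
  assumes partition: "(L, m) \<in> pointed_partitions n" and knapsack: "knapsack L"
    and L: "L = sum_list Ls + L0" and blocks: "{#} \<notin> set Ls"
  shows "(\<Sum>z\<in>{z\<in>Vset n L m. pc_le z (map sum_mset Ls, m + sum_mset L0)}. (-1::int) ^ length (fst z))
    = (-1) ^ size L"
proof -
  define c where "c = (map sum_mset Ls, m + sum_mset L0)"
  define embed where "embed xs = (map sum_mset xs, m)" for xs :: "nat multiset list"
  define D where "D = set_composition_lists Ls \<times> set_compositions L0"
  define glue where "glue = (\<lambda>(Nss, N0s). concat Nss @ (N0s :: nat multiset list))"
  have bij: "bij_betw embed (set_compositions L) (Vset n L m)"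
    unfolding embed_def by (rule bij_betw_set_compositions_Vset[OF partition knapsack])
  have below_c: "{z\<in>Vset n L m. pc_le z c} = embed ` {xs\<in>set_compositions L. pc_le (embed xs) c}"
  proof (intro equalityI subsetI)
    fix z assume z: "z \<in> {z\<in>Vset n L m. pc_le z c}"
    then have "z \<in> embed ` set_compositions L"
      using bij_betw_imp_surj_on[OF bij] by simp
    with z show "z \<in> embed ` {xs\<in>set_compositions L. pc_le (embed xs) c}"
      by auto
  qed (use bij_betw_apply[OF bij] in auto)
  have inj_embed: "inj_on embed {xs\<in>set_compositions L. pc_le (embed xs) c}"
    using bij by (auto simp: bij_betw_def intro: inj_on_subset)
  have glue_D: "glue ` D = {xs\<in>set_compositions L. pc_le (embed xs) c}"
  proof -
    have in_L: "glue d \<in> set_compositions L" if "d \<in> D" for d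
      using that L
      by (auto simp: D_def glue_def intro!: set_compositions_append concat_in_set_compositions)
    have below: "pc_le (embed xs) c \<longleftrightarrow> xs \<in> glue ` D" if "xs \<in> set_compositions L" for xs
      unfolding embed_def c_def set_composition_below_blocks_iff[OF knapsack L blocks that]
      by (force simp: D_def glue_def)
    show ?thesis
      using in_L below by blast
  qed
  have inj_glue: "inj_on glue D"
    by (auto simp: D_def glue_def intro!: inj_onI dest: concat_append_set_composition_lists_eqD)
  have "(\<Sum>z\<in>{z\<in>Vset n L m. pc_le z c}. (-1::int) ^ length (fst z))
      = (\<Sum>xs\<in>{xs\<in>set_compositions L. pc_le (embed xs) c}. (-1) ^ length xs)"
    by (rule sum.reindex_cong[OF inj_embed below_c]) (simp add: embed_def)
  also have "\<dots> = (\<Sum>d\<in>D. (-1) ^ length (glue d))"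
    by (rule sum.reindex_cong[OF inj_glue glue_D[symmetric] refl])
  also have "\<dots> = (\<Sum>Nss\<in>set_composition_lists Ls. (-1) ^ length (concat Nss))
      * (\<Sum>N0s\<in>set_compositions L0. (-1) ^ length N0s)"
    by (simp add: D_def glue_def sum_product sum.cartesian_product case_prod_unfold power_add)
  also have "\<dots> = (-1) ^ size L"
    by (simp add: sum_set_composition_lists_sign sum_set_compositions_sign L power_add)
  finally show ?thesis by (simp add: c_def)
qed

lemma compositions_in_pp_filter_obtain_blocks:
  assumes "c \<in> compositions_in n (pp_filter n (L, m))"
  obtains Ls L0 where "L = sum_list Ls + L0" "{#} \<notin> set Ls" "c = (map sum_mset Ls, m + sum_mset L0)"
proof -
  obtain cs ck where c: "c = (cs, ck)" by (cases c)
  have "pp_le (L, m) (mset cs, ck)"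
    using assms c by (simp add: compositions_in_def pp_filter_def ctype_def)
  then obtain G R where G: "L = sum_mset G + R" "mset cs = image_mset sum_mset G"
      "ck = m + sum_mset R" "{#} \<notin># G"
    unfolding pp_le_iff by auto
  obtain Ls where "G = mset Ls" "map sum_mset Ls = cs"
    using image_mset_eq_mset_obtain_list[OF G(2)[symmetric]] by metis
  with that[of Ls R] G c show ?thesis by (simp add: sum_mset_sum_list)
qed

lemma sum_Vset_signs_below:
  assumes partition: "(L, m) \<in> pointed_partitions n" and knapsack: "knapsack L"
    and c: "c \<in> compositions_in n (pp_filter n (L, m))"
  shows "(\<Sum>z\<in>{z\<in>compositions_in n (pp_filter n (L, m)). pc_le z c}.
      if z \<in> Vset n L m then (-1::int) ^ (size L + length (fst z) + 1) else 0) = -1"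
proof -
  let ?Q = "compositions_in n (pp_filter n (L, m))"
  obtain Ls L0 where L: "L = sum_list Ls + L0" "{#} \<notin> set Ls"
      and c_eq: "c = (map sum_mset Ls, m + sum_mset L0)"
    using compositions_in_pp_filter_obtain_blocks[OF c] .
  have "Vset n L m \<subseteq> ?Q" by (auto simp: Vset_def)
  then have "(\<Sum>z\<in>{z\<in>?Q. pc_le z c}. if z \<in> Vset n L m then (-1::int) ^ (size L + length (fst z) + 1) else 0)
      = (\<Sum>z\<in>{z\<in>Vset n L m. pc_le z c}. (-1) ^ (size L + 1) * (-1) ^ length (fst z))"
    by (subst sum.inter_filter[symmetric])
      (auto intro!: sum.cong simp: power_add finite_compositions_in)
  also have "\<dots> = (-1) ^ (size L + 1) * (\<Sum>z\<in>{z\<in>Vset n L m. pc_le z c}. (-1) ^ length (fst z))"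
    by (simp only: sum_distrib_left)
  also have "\<dots> = (-1) ^ (size L + 1) * (-1) ^ size L"
    using sum_Vset_below_blocks_sign[OF partition knapsack L] by (simp only: c_eq)
  also have "\<dots> = -1"
    by (simp add: power_add flip: power_mult_distrib)
  finally show ?thesis .
qed

lemma minus_one_powi_diff: "(-1::real) powi (int a - int b) = (-1) ^ (a + b)"
  by (cases "even b") (auto simp: power_int_diff power_add)

theorem theorem4p4:
  fixes n m :: nat and L :: "nat multiset" and c :: "nat list \<times> nat"
  assumes "(L, m) \<in> pointed_partitions n"
    and "knapsack L"
    and "c \<in> compositions_in n (pp_filter n (L, m))"
  shows "real_of_int
           (mobius (insert None (Some ` compositions_in n (pp_filter n (L, m)))) (le_hat pc_le)
              None (Some c))
         = (if c \<in> Vset n L m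
            then (-1::real) powi (int (size L) - int (length (fst c) + 1))
            else 0)"
proof -
  let ?Q = "compositions_in n (pp_filter n (L, m))"
  have "mobius (insert None (Some ` ?Q)) (le_hat pc_le) None (Some c)
      = (if c \<in> Vset n L m then (-1) ^ (size L + length (fst c) + 1) else 0)"
  proof (rule mobius_adjoined_bottom_eqI[where r = "\<lambda>z. n - length (fst z)"])
    show "n - length (fst x) < n - length (fst y)"
      if "x \<in> ?Q" "y \<in> ?Q" "pc_le x y" "x \<noteq> y" for x y
      using that pc_le_length_less[of x y] pointed_composition_length_le
      by (fastforce simp: compositions_in_def)
  qed (use assms sum_Vset_signs_below finite_compositions_in in auto)
  then show ?thesis
    using minus_one_powi_diff[of "size L" "length (fst c) + 1"] by simp
qed

end
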